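(* Let $b>a\ge0$, $\beta\in(0,1)$, and let $0w1$ be a valid word. Then the function $x\mapsto\lambda(0w1,x)$ is differentiable on $\mathbb{R}_+$ and $$\Big|\frac{d}{dx}\lambda(0w1,x)\Big|\le\frac{1}{(1-\beta)^2}\qquad\text{for all }x\ge0 .$$
   Context: Words are strings over $\{0,1\}$, $w_{1:n}=w_1\cdots w_n$ (with $w_{1:0}$ the empty word), $w^\omega$ the infinite repetition, $|w|$ the length. $\phi_0(x)=\frac{x+1}{ax+a+1}$, $\phi_1(x)=\frac{x+1}{bx+b+1}$ on $\mathbb{R}_+=[0,\infty)$, $\phi_w=\phi_{w_{|w|}}\circ\cdots\circ\phi_{w_1}$ (first letter applied first), $\phi_{\text{empty}}=\mathrm{id}$. For a possibly infinite word $u$, $S(u,x):=\sum_{n=0}^{|u|-1}\beta^n\phi_{u_{1:n}}(x)$, and $$\lambda(0w1,x):=\frac{1-\beta^{|0w1|}}{1-\beta}\Big(S\big((01w)^\omega,x\big)-S\big((10w)^\omega,x\big)\Big).$$ For $p\ge1$, $L_p,R_p$ are the word morphisms determined by $L_p(0)=0^{p+1}1$, $L_p(1)=0^p1$, $R_p(0)=01^p$, $R_p(1)=01^{p+1}$; the valid words form the smallest set of words containing $0,1$ and closed under all $L_p,R_p$. *)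

theory Defs
  imports "HOL-Analysis.Analysis"
begin

text \<open>Words over {0,1} are lists of naturals (letters 0 and 1).\<close>

definition phi :: "real \<Rightarrow> real \<Rightarrow> nat \<Rightarrow> real \<Rightarrow> real" where
  "phi a b c x = (if c = 0 then (x + 1) / (a * x + a + 1) else (x + 1) / (b * x + b + 1))"

fun phiw :: "real \<Rightarrow> real \<Rightarrow> nat list \<Rightarrow> real \<Rightarrow> real" where
  "phiw a b [] x = x"
| "phiw a b (c # w) x = phiw a b w (phi a b c x)"

text \<open>Infinite periodic word v^omega, as a function from positions (0-based) to letters.\<close>
definition omega_word :: "nat list \<Rightarrow> nat \<Rightarrow> nat" where
  "omega_word v i = v ! (i mod length v)"

text \<open>S(u,x) for an infinite word u (0-based positions): sum_n beta^n phi_{u_{1:n}}(x).\<close>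
definition S_inf :: "real \<Rightarrow> real \<Rightarrow> real \<Rightarrow> (nat \<Rightarrow> nat) \<Rightarrow> real \<Rightarrow> real" where
  "S_inf a b \<beta> u x = (\<Sum>n. \<beta> ^ n * phiw a b (map u [0..<n]) x)"

text \<open>lambda(0w1,x), parametrised by the middle part w.\<close>
definition lam :: "real \<Rightarrow> real \<Rightarrow> real \<Rightarrow> nat list \<Rightarrow> real \<Rightarrow> real" where
  "lam a b \<beta> w x = (1 - \<beta> ^ length (0 # w @ [1])) / (1 - \<beta>) *
     (S_inf a b \<beta> (omega_word (0 # 1 # w)) x - S_inf a b \<beta> (omega_word (1 # 0 # w)) x)"

definition Lmor :: "nat \<Rightarrow> nat \<Rightarrow> nat list" where
  "Lmor p c = (if c = 0 then replicate (p + 1) 0 @ [1] else replicate p 0 @ [1])"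

definition Rmor :: "nat \<Rightarrow> nat \<Rightarrow> nat list" where
  "Rmor p c = (if c = 0 then 0 # replicate p 1 else 0 # replicate (p + 1) 1)"

inductive valid :: "nat list \<Rightarrow> bool" where
  valid0: "valid [0]"
| valid1: "valid [1]"
| validL: "valid w \<Longrightarrow> 1 \<le> p \<Longrightarrow> valid (concat (map (Lmor p) w))"
| validR: "valid w \<Longrightarrow> 1 \<le> p \<Longrightarrow> valid (concat (map (Rmor p) w))"

end

theory Submission imports Defs begin

text \<open>Both series S((01w)^\<omega>, x) and S((10w)^\<omega>, x) may be differentiated termwise on
  the half-line. Each \<open>\<phi>_c\<close> is a Moebius map x \<mapsto> (x + 1) / (d x + d + 1) with d \<ge> 0; it maps
  the half-line into itself and has derivative 1 / (d x + d + 1)^2 \<in> (0, 1] there. By the chain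
  rule every \<open>\<phi>_u\<close> has derivative in [0, 1] on the half-line, so the differentiated series is
  dominated by \<open>\<Sum> \<beta>^n\<close> and S'(u, x) \<in> [0, 1 / (1 - \<beta>)]. Hence
  |\<lambda>'| \<le> (1 - \<beta>^|0w1|) / (1 - \<beta>) \<cdot> 1 / (1 - \<beta>) \<le> 1 / (1 - \<beta>)^2.
  The argument works for every word w.
\<close>

definition letter_coeff :: "real \<Rightarrow> real \<Rightarrow> nat \<Rightarrow> real" where
  "letter_coeff a b c = (if c = 0 then a else b)"

lemma letter_coeff_nonneg: "0 \<le> a \<Longrightarrow> 0 \<le> b \<Longrightarrow> 0 \<le> letter_coeff a b c"
  by (simp add: letter_coeff_def)

lemma phi_letter_coeff:
  "phi a b c x = (x + 1) / (letter_coeff a b c * x + letter_coeff a b c + 1)"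
  by (simp add: phi_def letter_coeff_def)

definition dphi :: "real \<Rightarrow> real \<Rightarrow> nat \<Rightarrow> real \<Rightarrow> real" where
  "dphi a b c x = 1 / (letter_coeff a b c * x + letter_coeff a b c + 1)\<^sup>2"

fun dphiw :: "real \<Rightarrow> real \<Rightarrow> nat list \<Rightarrow> real \<Rightarrow> real" where
  "dphiw a b [] x = 1"
| "dphiw a b (c # w) x = dphi a b c x * dphiw a b w (phi a b c x)"

lemma one_le_affine_nonneg: "0 \<le> (d::real) \<Longrightarrow> 0 \<le> x \<Longrightarrow> 1 \<le> d * x + d + 1"
  by simp

lemma phi_nonneg: "0 \<le> a \<Longrightarrow> 0 \<le> b \<Longrightarrow> 0 \<le> x \<Longrightarrow> 0 \<le> phi a b c x"
  by (simp add: phi_def)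

lemma phi_le_succ: "0 \<le> a \<Longrightarrow> 0 \<le> b \<Longrightarrow> 0 \<le> x \<Longrightarrow> phi a b c x \<le> x + 1"
  using one_le_affine_nonneg[OF letter_coeff_nonneg]
  by (simp add: phi_letter_coeff divide_le_eq)

lemma dphi_nonneg: "0 \<le> dphi a b c x"
  by (simp add: dphi_def)

lemma dphi_le_one: "0 \<le> a \<Longrightarrow> 0 \<le> b \<Longrightarrow> 0 \<le> x \<Longrightarrow> dphi a b c x \<le> 1"
  using one_le_affine_nonneg[OF letter_coeff_nonneg]
  by (simp add: dphi_def divide_le_eq_1 one_le_power)

lemma has_real_derivative_phi:
  assumes "0 \<le> a" "0 \<le> b" "0 \<le> x"
  shows "(phi a b c has_real_derivative dphi a b c x) (at x)"
proof -
  define d where "d = letter_coeff a b c"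
  have pos: "0 < d * x + d + 1"
    using one_le_affine_nonneg[OF letter_coeff_nonneg[OF assms(1,2), of c] assms(3)] unfolding d_def
    by linarith
  have deriv: "((\<lambda>x. (x + 1) / (d * x + d + 1)) has_real_derivative
      (1 * (d * x + d + 1) - (x + 1) * d) / (d * x + d + 1)\<^sup>2) (at x)"
    using pos by (auto intro!: derivative_eq_intros simp: power2_eq_square)
  have num: "1 * (d * x + d + 1) - (x + 1) * d = 1"
    by (simp add: algebra_simps)
  from deriv[unfolded num] show ?thesis
    unfolding phi_letter_coeff[abs_def] dphi_def d_def .
qed

lemma phiw_nonneg: "0 \<le> a \<Longrightarrow> 0 \<le> b \<Longrightarrow> 0 \<le> x \<Longrightarrow> 0 \<le> phiw a b w x"
  by (induction w arbitrary: x) (simp_all add: phi_nonneg)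

lemma phiw_le_add_length:
  "0 \<le> a \<Longrightarrow> 0 \<le> b \<Longrightarrow> 0 \<le> x \<Longrightarrow> phiw a b w x \<le> x + real (length w)"
proof (induction w arbitrary: x)
  case (Cons c w)
  then have "phiw a b w (phi a b c x) \<le> phi a b c x + real (length w)"
    by (simp add: phi_nonneg)
  with phi_le_succ[OF Cons.prems, of c] show ?case
    by simp
qed simp

lemma dphiw_nonneg: "0 \<le> dphiw a b w x"
  by (induction w arbitrary: x) (simp_all add: dphi_nonneg)

lemma dphiw_le_one: "0 \<le> a \<Longrightarrow> 0 \<le> b \<Longrightarrow> 0 \<le> x \<Longrightarrow> dphiw a b w x \<le> 1"
  by (induction w arbitrary: x)
    (simp_all add: mult_le_one dphi_nonneg dphiw_nonneg dphi_le_one phi_nonneg)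

lemma phiw_Nil_fun: "phiw a b [] = id"
  by (simp add: fun_eq_iff)

lemma phiw_Cons_fun: "phiw a b (c # w) = phiw a b w \<circ> phi a b c"
  by (simp add: fun_eq_iff)

lemma has_real_derivative_phiw:
  "0 \<le> a \<Longrightarrow> 0 \<le> b \<Longrightarrow> 0 \<le> x \<Longrightarrow> (phiw a b w has_real_derivative dphiw a b w x) (at x)"
proof (induction w arbitrary: x)
  case Nil
  show ?case
    by (simp add: phiw_Nil_fun DERIV_ident[unfolded id_def[symmetric]])
next
  case (Cons c w)
  have "(phiw a b w \<circ> phi a b c has_real_derivative
          dphiw a b w (phi a b c x) * dphi a b c x) (at x)"
    using Cons.IH[OF Cons.prems(1,2) phi_nonneg[OF Cons.prems]] has_real_derivative_phi[OF Cons.prems]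
    by (rule DERIV_chain)
  then show ?case
    unfolding phiw_Cons_fun dphiw.simps by (simp only: mult.commute)
qed

lemma summable_geometric_times_add:
  assumes "0 \<le> \<beta>" "\<beta> < (1::real)"
  shows "summable (\<lambda>n. \<beta> ^ n * (x + real n))"
proof -
  have "summable (\<lambda>n. diffs (\<lambda>_. 1::real) n * \<beta> ^ n)"
    by (rule termdiff_converges[of _ 1]) (use assms in \<open>auto intro!: summable_geometric\<close>)
  then have "summable (\<lambda>n. \<beta> ^ n * real n)"
    by (rule summable_comparison_test'[where N = 0])
       (use assms in \<open>auto simp: diffs_def algebra_simps\<close>)
  moreover have "summable (\<lambda>n. \<beta> ^ n * x)"
    using assms by (intro summable_mult2 summable_geometric) simp
  ultimately show ?thesis
    using summable_add by (force simp: algebra_simps)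
qed

lemma summable_S_inf_terms:
  assumes "0 \<le> a" "0 \<le> b" "0 \<le> x" "0 \<le> \<beta>" "\<beta> < 1"
  shows "summable (\<lambda>n. \<beta> ^ n * phiw a b (map u [0..<n]) x)"
proof (rule summable_comparison_test'[OF summable_geometric_times_add[OF assms(4,5)], where N = 0])
  fix n
  show "norm (\<beta> ^ n * phiw a b (map u [0..<n]) x) \<le> \<beta> ^ n * (x + real n)"
    using phiw_nonneg[OF assms(1-3)] phiw_le_add_length[OF assms(1-3), of "map u [0..<n]"] assms(4)
    by (simp add: abs_mult mult_left_mono)
qed

definition dS_inf :: "real \<Rightarrow> real \<Rightarrow> real \<Rightarrow> (nat \<Rightarrow> nat) \<Rightarrow> real \<Rightarrow> real" where
  "dS_inf a b \<beta> u x = (\<Sum>n. \<beta> ^ n * dphiw a b (map u [0..<n]) x)"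

lemma has_real_derivative_S_inf:
  assumes "0 \<le> a" "0 \<le> b" "0 \<le> \<beta>" "\<beta> < 1" "0 \<le> x"
  shows "(S_inf a b \<beta> u has_real_derivative dS_inf a b \<beta> u x) (at x within {0..})"
proof -
  define f where "f n t = \<beta> ^ n * phiw a b (map u [0..<n]) t" for n t
  define f' where "f' n t = \<beta> ^ n * dphiw a b (map u [0..<n]) t" for n t
  have termwise: "(f n has_field_derivative f' n t) (at t within {0..})" if "t \<in> {0..}" for n t
  proof -
    have "(f n has_field_derivative f' n t) (at t)"
      unfolding f_def[abs_def] f'_def
      using has_real_derivative_phiw[OF assms(1,2)] that by (auto intro: DERIV_cmult)
    then show ?thesis
      by (rule has_field_derivative_at_within)
  qed
  have uniform: "uniform_limit {0..} (\<lambda>n t. \<Sum>i<n. f' i t) (\<lambda>t. \<Sum>i. f' i t) sequentially"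
  proof (rule Weierstrass_m_test)
    show "norm (f' n t) \<le> \<beta> ^ n" if "t \<in> {0..}" for n t
      using dphiw_nonneg dphiw_le_one[OF assms(1,2)] that assms(3)
      by (simp add: f'_def abs_mult mult_left_le)
    show "summable (\<lambda>n. \<beta> ^ n)"
      using assms by (simp add: summable_geometric)
  qed
  have summable_at_x: "summable (\<lambda>n. f n x)"
    unfolding f_def using summable_S_inf_terms assms by blast
  have "x \<in> {0..}"
    using assms(5) by simp
  from has_field_derivative_series[OF convex_real_interval(1) termwise uniform this summable_at_x]
  obtain g where g: "\<forall>t\<in>{0..}. (\<lambda>n. f n t) sums g t \<and>
      (g has_field_derivative (\<Sum>i. f' i t)) (at t within {0..})"
    by blast
  show ?thesis
  proof (rule has_field_derivative_transform_within[where d = 1])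
    show "(g has_real_derivative dS_inf a b \<beta> u x) (at x within {0..})"
      using g assms(5) by (simp add: dS_inf_def f'_def)
    show "g t = S_inf a b \<beta> u t" if "t \<in> {0..}" for t
      using g that unfolding S_inf_def f_def by (metis sums_unique)
  qed (use assms in auto)
qed

lemma dS_inf_bounds:
  assumes "0 \<le> a" "0 \<le> b" "0 \<le> \<beta>" "\<beta> < 1" "0 \<le> x"
  shows "0 \<le> dS_inf a b \<beta> u x" "dS_inf a b \<beta> u x \<le> 1 / (1 - \<beta>)"
proof -
  define t where "t n = \<beta> ^ n * dphiw a b (map u [0..<n]) x" for n
  have t_nonneg: "0 \<le> t n" for n
    using assms(3) dphiw_nonneg by (simp add: t_def)
  have t_le: "t n \<le> \<beta> ^ n" for n
    using assms(3) dphiw_le_one[OF assms(1,2,5)] t_nonneg by (simp add: t_def mult_left_le)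
  have "summable t"
    using t_nonneg t_le assms(3,4)
    by (intro summable_comparison_test'[OF summable_geometric[of \<beta>], where N = 0]) auto
  then have sums: "t sums dS_inf a b \<beta> u x"
    unfolding dS_inf_def t_def[symmetric] by (rule summable_sums)
  show "0 \<le> dS_inf a b \<beta> u x"
    using sums_le[OF _ sums_zero sums] t_nonneg by blast
  show "dS_inf a b \<beta> u x \<le> 1 / (1 - \<beta>)"
    using sums_le[OF _ sums geometric_sums] t_le assms(3,4) by auto
qed

definition dlam :: "real \<Rightarrow> real \<Rightarrow> real \<Rightarrow> nat list \<Rightarrow> real \<Rightarrow> real" where
  "dlam a b \<beta> w x = (1 - \<beta> ^ length (0 # w @ [1])) / (1 - \<beta>) *
     (dS_inf a b \<beta> (omega_word (0 # 1 # w)) x - dS_inf a b \<beta> (omega_word (1 # 0 # w)) x)"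

lemma has_real_derivative_lam:
  assumes "0 \<le> a" "0 \<le> b" "0 \<le> \<beta>" "\<beta> < 1" "0 \<le> x"
  shows "(lam a b \<beta> w has_real_derivative dlam a b \<beta> w x) (at x within {0..})"
  unfolding lam_def[abs_def] dlam_def
  using has_real_derivative_S_inf[OF assms] by (intro DERIV_cmult DERIV_diff)

lemma abs_dlam_le:
  assumes "0 \<le> a" "0 \<le> b" "0 \<le> \<beta>" "\<beta> < 1" "0 \<le> x"
  shows "\<bar>dlam a b \<beta> w x\<bar> \<le> 1 / (1 - \<beta>)\<^sup>2"
proof -
  define C where "C = (1 - \<beta> ^ length (0 # w @ [1])) / (1 - \<beta>)"
  have "\<beta> ^ length (0 # w @ [1]) \<le> 1"
    using assms(3,4) by (intro power_le_one) auto
  then have C: "0 \<le> C" "C \<le> 1 / (1 - \<beta>)"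
    using assms(3,4) by (auto simp: C_def divide_right_mono)
  have "\<bar>dS_inf a b \<beta> (omega_word (0 # 1 # w)) x - dS_inf a b \<beta> (omega_word (1 # 0 # w)) x\<bar>
      \<le> 1 / (1 - \<beta>)"
    using dS_inf_bounds[OF assms, of "omega_word (0 # 1 # w)"]
      dS_inf_bounds[OF assms, of "omega_word (1 # 0 # w)"] by linarith
  then have "\<bar>C * (dS_inf a b \<beta> (omega_word (0 # 1 # w)) x - dS_inf a b \<beta> (omega_word (1 # 0 # w)) x)\<bar>
      \<le> 1 / (1 - \<beta>) * (1 / (1 - \<beta>))"
    unfolding abs_mult using C assms(4) by (intro mult_mono) auto
  then show ?thesis
    by (simp add: dlam_def C_def power2_eq_square)
qed

lemma at_within_atLeast_nontrivial:
  assumes "0 \<le> (x::real)"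
  shows "at x within {0..} \<noteq> bot"
proof
  assume "at x within {0..} = bot"
  moreover have "at_right x \<le> at x within {0..}"
    using assms by (intro at_le) auto
  ultimately show False
    using trivial_limit_at_right_real[of x] by (simp add: bot_unique)
qed

theorem mainTheorem14:
  fixes a b \<beta> :: real and w :: "nat list"
  assumes "0 \<le> a" and "a < b" and "0 < \<beta>" and "\<beta> < 1"
    and "valid (0 # w @ [1])"
  shows "(\<forall>x::real. 0 \<le> x \<longrightarrow> (\<exists>D. ((\<lambda>t. lam a b \<beta> w t) has_real_derivative D) (at x within {0..})))
       \<and> (\<forall>x D. 0 \<le> x \<longrightarrow> ((\<lambda>t. lam a b \<beta> w t) has_real_derivative D) (at x within {0..})
              \<longrightarrow> \<bar>D\<bar> \<le> 1 / (1 - \<beta>)^2)"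
proof -
  have params: "0 \<le> a" "0 \<le> b" "0 \<le> \<beta>" "\<beta> < 1"
    using assms(1-4) by auto
  have "\<bar>D\<bar> \<le> 1 / (1 - \<beta>)\<^sup>2"
    if "0 \<le> x" "(lam a b \<beta> w has_real_derivative D) (at x within {0..})" for x D
    using has_field_derivative_unique[OF that(2) has_real_derivative_lam[OF params that(1)]
        at_within_atLeast_nontrivial[OF that(1)]]
      abs_dlam_le[OF params that(1)] by simp
  then show ?thesis
    using has_real_derivative_lam[OF params] by blast
qed

end
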